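(* Fix a constant $\beta\ge 0$. The class of distributions supported on $[0,1]$ with $\textsc{IrregCoeff}(F)\le\beta$ can be described with $\tilde{O}(\epsilon^{-1/2})$ bits and error $\epsilon$ (the hidden constants may depend on $\beta$).
   Context: For a distribution with CDF $F$, $\textsc{IrregCoeff}(F)=\inf\{\beta\ge0: q\mapsto qF^{-1}(1-q)+\beta\int_{1-q}^1F^{-1}(x)\,dx \text{ is concave on }[0,1]\}$. For smooth distributions (no point masses, $C^1$ PDF $f$), $\textsc{IrregCoeff}(F)\le\beta$ corresponds to $f'(v)(1-F(v))\ge-(2+\beta)f(v)^2$. The Lévy distance is $\mathrm{L\acute{e}vy}(F,G)=\inf\{\epsilon: F(v-\epsilon)-\epsilon\le G(v)\le F(v+\epsilon)+\epsilon\ \forall v\}$. A class $\mathcal{C}$ can be described with $b$ bits and error $\epsilon$ if there is a class $\mathcal{C}'$ with $|\mathcal{C}'|\le2^b$ such that every $F\in\mathcal{C}$ has some $F'\in\mathcal{C}'$ with $\mathrm{L\acute{e}vy}(F,F')\le\epsilon$. $\tilde{O}$ hides polylog$(1/\epsilon)$ factors. *)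

theory Defs
  imports "HOL-Probability.Probability"
begin

text \<open>For x > 0 it is the usual inf{v. F v \<ge> x}; at x = 0 we use the left end of
  the support, inf{v. F v > 0} (the left limit of the quantile function).\<close>
definition quantile :: "(real \<Rightarrow> real) \<Rightarrow> real \<Rightarrow> real" where
  "quantile F x = (if x = 0 then Inf {v. 0 < F v} else Inf {v. x \<le> F v})"

text \<open>Irregularity coefficient, valued in the extended reals (Inf of empty set = \<infinity>).\<close>
definition irreg_coeff :: "(real \<Rightarrow> real) \<Rightarrow> ereal" where
  "irreg_coeff F = Inf (ereal ` {\<beta>. \<beta> \<ge> 0 \<and>
      concave_on {0..1} (\<lambda>q. q * quantile F (1 - q) + \<beta> * integral {1 - q..1} (quantile F))})"

definition levy_dist :: "(real \<Rightarrow> real) \<Rightarrow> (real \<Rightarrow> real) \<Rightarrow> real" where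
  "levy_dist F G = Inf {\<epsilon>. \<epsilon> \<ge> 0 \<and>
      (\<forall>v. F (v - \<epsilon>) - \<epsilon> \<le> G v \<and> G v \<le> F (v + \<epsilon>) + \<epsilon>)}"

definition describable :: "real measure set \<Rightarrow> real \<Rightarrow> real \<Rightarrow> bool" where
  "describable \<C> b \<epsilon> \<longleftrightarrow> (\<exists>\<C>'. finite \<C>' \<and> real (card \<C>') \<le> 2 powr b \<and>
      (\<forall>M'\<in>\<C>'. real_distribution M') \<and>
      (\<forall>M\<in>\<C>. \<exists>M'\<in>\<C>'. levy_dist (cdf M) (cdf M') \<le> \<epsilon>))"

definition irreg_class :: "real \<Rightarrow> real measure set" where
  "irreg_class \<beta> = {M. real_distribution M \<and> measure M {0..1} = 1 \<and>
      irreg_coeff (cdf M) \<le> ereal \<beta>}"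

end

theory Submission
  imports Defs
begin

text \<open>Write \<open>V q = F\<^sup>-\<^sup>1(1 - q)\<close> and \<open>S q = \<integral>\<^sub>1\<^sub>-\<^sub>q\<^sup>1 F\<^sup>-\<^sup>1\<close>. Sample the antitone curve
  \<open>q \<mapsto> (q, V q)\<close> at \<open>O(1/\<epsilon>)\<close> points in \<open>[\<epsilon>/4, 1 - \<epsilon>/4]\<close> equally spaced in \<open>q - V q\<close>,
  and let \<open>\<alpha>\<^sub>i\<close> be the share of the \<open>V\<close>-coordinate in the \<open>i\<close>-th step. Concavity of
  \<open>q V q + \<beta> S q\<close> at three consecutive samples shows that \<open>\<alpha>\<close> can drop by at most
  \<open>2 (1 + \<beta>) (ln q\<^sub>i\<^sub>+\<^sub>1 - ln q\<^sub>i)\<close> per step, so \<open>\<alpha>\<close> has total variation \<open>O(log (1/\<epsilon>))\<close>.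
  Keeping every \<open>w\<close>-th sample, \<open>w = \<lceil>1/\<surd>\<epsilon>\<rceil>\<close>, together with those where \<open>w\<close> times the positive
  or negative variation of \<open>\<alpha>\<close> crosses an integer gives \<open>O(w log (1/\<epsilon>))\<close> knots between which
  the samples stay \<open>O(\<epsilon>)\<close>-close to the chords. Rounding the knots to a grid of mesh \<open>\<epsilon>/8\<close> and
  interpolating linearly gives a function \<open>V'\<close> with \<open>V (q + \<epsilon>) - \<epsilon> \<le> V' q \<le> V (q - \<epsilon>) + \<epsilon>\<close>,
  so the law of \<open>V'(1 - U)\<close>, \<open>U\<close> uniform on \<open>[0, 1]\<close>, is within Levy distance \<open>\<epsilon>\<close>. A knot list
  is one of \<open>(1/\<epsilon>)\<^bsup>O(w log (1/\<epsilon>))\<^esup>\<close> choices.\<close>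

section \<open>Quantile functions of distributions on [0, 1]\<close>

locale prob_on_unit_interval = real_distribution M for M +
  assumes measure_unit_interval: "measure M {0..1} = 1"
begin

abbreviation "F \<equiv> cdf M"
abbreviation "Q \<equiv> quantile F"

lemma cdf_eq_0: "v < 0 \<Longrightarrow> F v = 0"
proof -
  assume v: "v < 0"
  have "F v \<le> measure M (space M - {0..1})" unfolding cdf_def
    using v by (intro finite_measure_mono) auto
  also have "\<dots> = 0" using prob_compl[of "{0..1}"] measure_unit_interval by simp
  finally show ?thesis using cdf_nonneg[of v] by linarith
qed

lemma cdf_eq_1: "1 \<le> v \<Longrightarrow> F v = 1"
proof -
  assume v: "1 \<le> v"
  have "measure M {0..1} \<le> F v" unfolding cdf_def using v
    by (intro finite_measure_mono) auto
  thus ?thesis using measure_unit_interval cdf_bounded_prob[of v] by linarith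
qed

lemma bdd_below_cdf_superlevel: "0 < x \<Longrightarrow> bdd_below {w. x \<le> F w}"
  by (rule bdd_belowI[where m=0]) (metis cdf_eq_0 mem_Collect_eq not_less)

lemma quantile_pos: "0 < x \<Longrightarrow> Q x = Inf {w. x \<le> F w}"
  unfolding quantile_def by simp

lemma cdf_quantile_ge:
  assumes x: "0 < x" "x \<le> 1"
  shows "x \<le> F (Q x)"
proof -
  have "1 \<in> {w. x \<le> F w}" using cdf_eq_1[of 1] x by simp
  hence ne: "{w. x \<le> F w} \<noteq> {}" by blast
  have "eventually (\<lambda>w. x \<le> F w) (at_right (Q x))"
  proof (rule eventually_at_rightI[of "Q x" "Q x + 1"])
    fix w assume "w \<in> {Q x<..<Q x + 1}"
    then obtain w' where "x \<le> F w'" "w' < w"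
      using cInf_less_iff[OF ne bdd_below_cdf_superlevel[OF x(1)]] quantile_pos[OF x(1)] by auto
    thus "x \<le> F w" using cdf_nondecreasing[of w' w] by auto
  qed simp
  moreover have "(F \<longlongrightarrow> F (Q x)) (at_right (Q x))"
    using cdf_is_right_cont[of "Q x"] by (simp add: continuous_within)
  ultimately show ?thesis by (intro tendsto_lowerbound) auto
qed

lemma quantile_le_iff:
  assumes x: "0 < x" "x \<le> 1"
  shows "Q x \<le> w \<longleftrightarrow> x \<le> F w"
proof
  assume "Q x \<le> w"
  thus "x \<le> F w" using cdf_quantile_ge[OF x] cdf_nondecreasing order_trans by blast
next
  assume "x \<le> F w"
  thus "Q x \<le> w" unfolding quantile_pos[OF x(1)]
    using bdd_below_cdf_superlevel[OF x(1)] by (intro cInf_lower) auto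
qed

lemma quantile_0_le:
  assumes y: "0 < y" "y \<le> 1"
  shows "Q 0 \<le> Q y"
proof -
  have "1 \<in> {w. y \<le> F w}" using cdf_eq_1[of 1] y by simp
  hence "Inf {v. 0 < F v} \<le> Inf {w. y \<le> F w}" using y
    by (intro cInf_superset_mono) (auto intro!: bdd_belowI[where m=0] simp: cdf_eq_0 not_less[symmetric] intro: ccontr)
  thus ?thesis unfolding quantile_def using y by simp
qed

lemma quantile_mono: "0 \<le> x \<Longrightarrow> x \<le> y \<Longrightarrow> y \<le> 1 \<Longrightarrow> Q x \<le> Q y"
proof -
  assume xy: "0 \<le> x" "x \<le> y" "y \<le> 1"
  show "Q x \<le> Q y"
  proof (cases "x = 0")
    case True thus ?thesis using quantile_0_le[of y] xy by (cases "y = 0") auto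
  next
    case False
    hence "x \<le> F (Q y)" using cdf_quantile_ge[of y] xy by auto
    thus ?thesis using quantile_le_iff[of x] xy False by auto
  qed
qed

lemma quantile_bounds: "0 \<le> x \<Longrightarrow> x \<le> 1 \<Longrightarrow> 0 \<le> Q x \<and> Q x \<le> 1"
proof -
  assume x: "0 \<le> x" "x \<le> 1"
  have "1 \<in> {v. 0 < F v}" using cdf_eq_1[of 1] by simp
  hence "0 \<le> Q 0" unfolding quantile_def
    by (auto intro!: cInf_greatest) (metis cdf_eq_0 less_irrefl not_le)
  moreover have "Q 1 \<le> 1" using quantile_le_iff[of 1 1] cdf_eq_1[of 1] by simp
  ultimately show ?thesis using quantile_mono[of 0 x] quantile_mono[of x 1] x by auto
qed

lemma quantile_integrable: "0 \<le> a \<Longrightarrow> b \<le> 1 \<Longrightarrow> Q integrable_on {a..b}"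
  by (intro integrable_on_mono_on) (auto simp: mono_on_def intro!: quantile_mono)

lemma integral_quantile_bounds:
  assumes "0 \<le> a" "a \<le> b" "b \<le> 1"
  shows "(b - a) * Q a \<le> integral {a..b} Q \<and> integral {a..b} Q \<le> (b - a) * Q b"
proof
  have "integral {a..b} (\<lambda>_. Q a) \<le> integral {a..b} Q"
    using assms by (intro integral_le quantile_integrable) (auto intro: quantile_mono)
  thus "(b - a) * Q a \<le> integral {a..b} Q" using assms by simp
  have "integral {a..b} Q \<le> integral {a..b} (\<lambda>_. Q b)"
    using assms by (intro integral_le quantile_integrable) (auto intro: quantile_mono)
  thus "integral {a..b} Q \<le> (b - a) * Q b" using assms by simp
qed

definition V :: "real \<Rightarrow> real" where "V q = Q (1 - q)"
definition S :: "real \<Rightarrow> real" where "S q = integral {1 - q..1} Q"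

lemma V_bounds: "0 \<le> q \<Longrightarrow> q \<le> 1 \<Longrightarrow> 0 \<le> V q \<and> V q \<le> 1"
  unfolding V_def using quantile_bounds by simp

lemma V_antimono: "0 \<le> q \<Longrightarrow> q \<le> q' \<Longrightarrow> q' \<le> 1 \<Longrightarrow> V q' \<le> V q"
  unfolding V_def by (intro quantile_mono) auto

lemma S_increment_bounds:
  assumes "0 \<le> q" "q \<le> q'" "q' \<le> 1"
  shows "(q' - q) * V q' \<le> S q' - S q \<and> S q' - S q \<le> (q' - q) * V q"
proof -
  have "integral {1-q'..1-q} Q + integral {1-q..1} Q = integral {1-q'..1} Q"
    using Henstock_Kurzweil_Integration.integral_combine[where f=Q and a="1-q'" and c="1-q" and b=1] quantile_integrable[of "1-q'" 1] assms by simp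
  hence "S q' - S q = integral {1-q'..1-q} Q" unfolding S_def by simp
  thus ?thesis using integral_quantile_bounds[of "1-q'" "1-q"] assms unfolding V_def by auto
qed

lemma S_lipschitz: "lipschitz_on 1 {0..1} S"
proof (rule lipschitz_onI)
  have ordered: "dist (S x) (S y) \<le> 1 * dist x y" if "0 \<le> x" "x \<le> y" "y \<le> 1" for x y
    using S_increment_bounds[OF that] V_bounds[of x] V_bounds[of y] that unfolding dist_real_def
    by (smt (verit) mult_left_le mult_nonneg_nonneg)
  thus "dist (S x) (S y) \<le> 1 * dist x y" if "x \<in> {0..1}" "y \<in> {0..1}" for x y
    using that ordered[of x y] ordered[of y x] by (cases "x \<le> y") (auto simp: dist_commute)
qed simp

end

section \<open>The concavity hypothesis\<close>

locale irregularity_bounded = prob_on_unit_interval +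
  fixes b :: real
  assumes b_nonneg: "0 \<le> b"
    and concave: "concave_on {0..1} (\<lambda>q. q * quantile (cdf M) (1 - q) + b * integral {1 - q..1} (quantile (cdf M)))"
begin

definition H :: "real \<Rightarrow> real" where "H q = q * V q + b * S q"

lemma H_concave: "concave_on {0..1} H"
  using concave unfolding H_def V_def S_def by simp

lemma V_continuous: "continuous_on {0<..<1} V"
proof -
  have "continuous_on {0<..<1} H"
    using H_concave unfolding concave_on_def
    by (intro continuous_on_minus[of _ "\<lambda>x. - H x", simplified] convex_on_continuous)
       (auto intro: convex_on_subset)
  moreover have "continuous_on {0<..<1} S"
    using lipschitz_on_continuous_on[OF S_lipschitz] by (rule continuous_on_subset) auto
  ultimately have "continuous_on {0<..<1} (\<lambda>q. (H q - b * S q) / q)"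
    by (intro continuous_intros) auto
  moreover have "(H q - b * S q) / q = V q" if "q \<in> {0<..<1}" for q
    using that unfolding H_def by auto
  ultimately show ?thesis using continuous_on_cong by (metis (no_types, lifting))
qed

text \<open>Concavity of \<open>H\<close> at \<open>q\<^sub>1 < q\<^sub>2 < q\<^sub>3\<close>, with the integral terms \<open>S\<close> eliminated through
  \<open>S_increment_bounds\<close>.\<close>
lemma V_three_point:
  assumes q: "0 \<le> q1" "q1 < q2" "q2 < q3" "q3 \<le> 1"
  shows "q2 * ((q2 - q1) * (V q2 - V q3) - (q3 - q2) * (V q1 - V q2))
     \<ge> - (1 + b) * (q2 - q1) * (q3 - q2) * (V q1 - V q3)"
proof -
  define a where "a = q2 - q1"
  define c where "c = q3 - q2"
  have ac: "a > 0" "c > 0" using q unfolding a_def c_def by auto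
  define t where "t = a / (a + c)"
  have t: "0 \<le> t" "t \<le> 1" "(a + c) * (1 - t) = c" "(a + c) * t = a"
    using ac unfolding t_def by (auto simp: field_simps)
  have "t * (q3 - q1) = a" using ac unfolding t_def a_def c_def by (simp add: field_simps)
  hence "(1 - t) *\<^sub>R q1 + t *\<^sub>R q3 = q2" unfolding a_def by (simp add: algebra_simps)
  hence "H q2 \<ge> (1 - t) * H q1 + t * H q3"
    using concave_onD[OF H_concave t(1,2), of q1 q3] q by auto
  hence "(a + c) * H q2 \<ge> ((a + c) * (1 - t)) * H q1 + ((a + c) * t) * H q3"
    using ac mult_left_mono[of _ _ "a + c"] by (fastforce simp: algebra_simps)
  hence main: "(a + c) * H q2 \<ge> c * H q1 + a * H q3" unfolding t(3,4) .
  have "a * V q2 \<le> S q2 - S q1" "S q2 - S q1 \<le> a * V q1"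
       "c * V q3 \<le> S q3 - S q2" "S q3 - S q2 \<le> c * V q2"
    using S_increment_bounds[of q1 q2] S_increment_bounds[of q2 q3] q unfolding a_def c_def by auto
  hence "a * (S q3 - S q2) - c * (S q2 - S q1) \<ge> a * (c * V q3) - c * (a * V q1)"
    using ac by (smt (verit) mult_left_mono)
  hence "b * (a * (S q3 - S q2) - c * (S q2 - S q1)) \<ge> b * (a * (c * V q3) - c * (a * V q1))"
    using b_nonneg by (intro mult_left_mono) auto
  moreover have q13: "q1 = q2 - a" "q3 = q2 + c" unfolding a_def c_def by auto
  ultimately have "q2 * (a * (V q2 - V q3) - c * (V q1 - V q2)) + a * c * (V q1 - V q3)
      \<ge> - b * a * c * (V q1 - V q3)"
    using main unfolding H_def q13 by (simp add: algebra_simps)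
  thus ?thesis unfolding a_def[symmetric] c_def[symmetric] by (simp add: algebra_simps)
qed

end

text \<open>The infimum defining \<open>irreg_coeff\<close> need not be attained, so we only get some admissible
  coefficient below \<open>\<beta> + 1\<close>.\<close>
lemma irreg_class_imp_irregularity_bounded:
  assumes "M \<in> irreg_class \<beta>"
  obtains b where "0 \<le> b" "b \<le> \<beta> + 1" "irregularity_bounded M b"
proof -
  have M: "real_distribution M" "measure M {0..1} = 1" "irreg_coeff (cdf M) < ereal (\<beta> + 1)"
    using assms unfolding irreg_class_def by (auto simp: order_le_less_trans)
  then obtain b where "b \<ge> 0" "ereal b < ereal (\<beta> + 1)"
    "concave_on {0..1} (\<lambda>q. q * quantile (cdf M) (1 - q) + b * integral {1 - q..1} (quantile (cdf M)))"
    unfolding irreg_coeff_def Inf_less_iff by auto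
  thus ?thesis using M
    by (intro that[of b]) (auto simp: irregularity_bounded_def irregularity_bounded_axioms_def
      prob_on_unit_interval_def prob_on_unit_interval_axioms_def)
qed

section \<open>Sampling the quantile curve\<close>

locale sampling = irregularity_bounded +
  fixes e :: real
  assumes e_pos: "0 < e" and e_less_half: "e < 1/2"
begin

definition c :: real where "c = e / 4"

definition \<sigma> :: "real \<Rightarrow> real" where "\<sigma> q = q - V q"
definition N :: nat where "N = nat \<lceil>32 / e\<rceil>"
definition \<tau> :: real where "\<tau> = (\<sigma> (1 - c) - \<sigma> c) / real N"
definition qs :: "nat \<Rightarrow> real" where
  "qs i = (SOME q. c \<le> q \<and> q \<le> 1 - c \<and> \<sigma> q = \<sigma> c + real i * \<tau>)"
definition Vs :: "nat \<Rightarrow> real" where "Vs i = V (qs i)"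
definition dq :: "nat \<Rightarrow> real" where "dq i = qs (Suc i) - qs i"
definition dv :: "nat \<Rightarrow> real" where "dv i = Vs i - Vs (Suc i)"
definition \<alpha> :: "nat \<Rightarrow> real" where "\<alpha> i = dv i / \<tau>"

lemma c_bounds: "0 < c" "c \<le> 1/8" "c < 1 - c"
  using e_pos e_less_half unfolding c_def by auto

lemma \<sigma>_strict_mono: "0 \<le> q \<Longrightarrow> q < q' \<Longrightarrow> q' \<le> 1 \<Longrightarrow> \<sigma> q < \<sigma> q'"
  unfolding \<sigma>_def using V_antimono[of q q'] by auto

lemma \<sigma>_inj: "c \<le> x \<Longrightarrow> x \<le> 1 - c \<Longrightarrow> c \<le> y \<Longrightarrow> y \<le> 1 - c \<Longrightarrow> \<sigma> x = \<sigma> y \<Longrightarrow> x = y"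
  using \<sigma>_strict_mono[of x y] \<sigma>_strict_mono[of y x] c_bounds by (cases x y rule: linorder_cases) auto

lemma \<sigma>_continuous: "continuous_on {c..1-c} \<sigma>"
proof -
  have "continuous_on {c..1-c} V"
    by (rule continuous_on_subset[OF V_continuous]) (use c_bounds in auto)
  thus ?thesis unfolding \<sigma>_def by (intro continuous_intros)
qed

lemma N_bounds: "32 / e \<le> real N" "real N \<le> 32 / e + 1" "0 < N"
proof -
  have "0 < 32 / e" using e_pos by simp
  thus "32 / e \<le> real N" "real N \<le> 32 / e + 1" unfolding N_def by linarith+
  thus "0 < N" using \<open>0 < 32 / e\<close> by linarith
qed

lemma \<sigma>_range: "1 - 2 * c \<le> \<sigma> (1 - c) - \<sigma> c" "\<sigma> (1 - c) - \<sigma> c \<le> 2"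
  using V_antimono[of c "1-c"] V_bounds[of c] V_bounds[of "1-c"] c_bounds unfolding \<sigma>_def by auto

lemma \<tau>_pos: "0 < \<tau>" and \<tau>_le: "\<tau> \<le> e / 16"
proof -
  show "0 < \<tau>" unfolding \<tau>_def using \<sigma>_range c_bounds N_bounds by auto
  have "\<tau> \<le> 2 / real N" unfolding \<tau>_def using \<sigma>_range N_bounds by (intro divide_right_mono) auto
  also have "\<dots> \<le> 2 / (32 / e)" using N_bounds e_pos by (intro divide_left_mono) auto
  finally show "\<tau> \<le> e / 16" by simp
qed

lemma qs_spec:
  assumes "i \<le> N"
  shows "c \<le> qs i \<and> qs i \<le> 1 - c \<and> \<sigma> (qs i) = \<sigma> c + real i * \<tau>"
proof -
  have "real i * \<tau> \<le> real N * \<tau>" using assms \<tau>_pos by (intro mult_right_mono) auto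
  also have "\<dots> = \<sigma> (1 - c) - \<sigma> c" unfolding \<tau>_def using N_bounds by simp
  finally obtain q where "c \<le> q" "q \<le> 1 - c" "\<sigma> q = \<sigma> c + real i * \<tau>"
    using IVT'[of \<sigma> c "\<sigma> c + real i * \<tau>" "1 - c"] \<sigma>_continuous \<tau>_pos c_bounds by auto
  thus ?thesis unfolding qs_def
    by (intro someI[of "\<lambda>q. c \<le> q \<and> q \<le> 1 - c \<and> \<sigma> q = \<sigma> c + real i * \<tau>" q]) auto
qed

lemma qs_bounds: "i \<le> N \<Longrightarrow> 0 < qs i \<and> qs i < 1"
  using qs_spec[of i] c_bounds by auto

lemma qs_0: "qs 0 = c"
proof -
  have "c \<le> qs 0" "qs 0 \<le> 1 - c" "\<sigma> (qs 0) = \<sigma> c" using qs_spec[of 0] by auto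
  thus ?thesis using c_bounds \<sigma>_inj by simp
qed

lemma qs_N: "qs N = 1 - c"
proof -
  have "c \<le> qs N" "qs N \<le> 1 - c" "\<sigma> (qs N) = \<sigma> (1 - c)"
    using qs_spec[of N] N_bounds unfolding \<tau>_def by auto
  thus ?thesis using c_bounds \<sigma>_inj by simp
qed

lemma qs_Vs_increment:
  assumes "i \<le> j" "j \<le> N"
  shows "(qs j - qs i) + (Vs i - Vs j) = real (j - i) * \<tau>"
proof -
  have "\<sigma> (qs j) - \<sigma> (qs i) = (real j - real i) * \<tau>"
    using qs_spec[of i] qs_spec[of j] assms by (simp add: left_diff_distrib)
  thus ?thesis using assms unfolding \<sigma>_def Vs_def by (simp add: of_nat_diff)
qed

lemma qs_strict_mono:
  assumes ij: "i < j" "j \<le> N"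
  shows "qs i < qs j"
proof (rule ccontr)
  assume "\<not> qs i < qs j"
  hence "Vs i \<le> Vs j" unfolding Vs_def using qs_bounds[of i] qs_bounds[of j] ij by (intro V_antimono) auto
  moreover have "0 < real (j - i) * \<tau>" using ij \<tau>_pos by simp
  ultimately show False using qs_Vs_increment[of i j] ij \<open>\<not> qs i < qs j\<close> by linarith
qed

lemma qs_mono: "i \<le> j \<Longrightarrow> j \<le> N \<Longrightarrow> qs i \<le> qs j"
  using qs_strict_mono[of i j] by (cases "i = j") auto

lemma increments_bounded:
  assumes "i \<le> j" "j \<le> N"
  shows "0 \<le> qs j - qs i \<and> qs j - qs i \<le> real (j - i) * \<tau> \<and> 0 \<le> Vs i - Vs j \<and> Vs i - Vs j \<le> real (j - i) * \<tau>"
  using qs_Vs_increment[OF assms] qs_mono[OF assms] V_antimono[of "qs i" "qs j"] qs_bounds[of i] qs_bounds[of j] assms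
  unfolding Vs_def by auto

lemma step_spec: "i < N \<Longrightarrow> dq i + dv i = \<tau> \<and> 0 < dq i \<and> 0 \<le> dv i"
  using qs_Vs_increment[of i "Suc i"] qs_strict_mono[of i "Suc i"] increments_bounded[of i "Suc i"]
  unfolding dq_def dv_def by auto

lemma \<alpha>_bounds: "i < N \<Longrightarrow> 0 \<le> \<alpha> i \<and> \<alpha> i \<le> 1"
  using step_spec[of i] \<tau>_pos unfolding \<alpha>_def by (auto simp: divide_le_eq_1)

lemma dq_le_ln: "i < N \<Longrightarrow> dq i / qs (Suc i) \<le> ln (qs (Suc i)) - ln (qs i)"
proof -
  assume i: "i < N"
  have p: "0 < qs i" "0 < qs (Suc i)" using qs_bounds i by auto
  have "ln (qs i / qs (Suc i)) \<le> qs i / qs (Suc i) - 1" using p by (intro ln_le_minus_one) auto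
  moreover have "qs i / qs (Suc i) - 1 = - (dq i / qs (Suc i))" unfolding dq_def using p
    by (simp add: field_simps)
  ultimately show ?thesis using p by (simp add: ln_div)
qed

lemma dv_turn:
  assumes i: "Suc (Suc i) \<le> N"
  shows "qs (Suc i) * (dv (Suc i) - dv i) \<ge> - 2 * (1 + b) * \<tau> * dq i"
proof -
  let ?q1 = "qs i" and ?q2 = "qs (Suc i)" and ?q3 = "qs (Suc (Suc i))"
  have "0 \<le> ?q1" "?q1 < ?q2" "?q2 < ?q3" "?q3 \<le> 1"
    using qs_bounds[of i] qs_bounds[of "Suc (Suc i)"] qs_strict_mono[of i "Suc i"] qs_strict_mono[of "Suc i" "Suc (Suc i)"] i
    by auto
  from V_three_point[OF this]
  have tp: "?q2 * (dq i * dv (Suc i) - dq (Suc i) * dv i) \<ge> - (1 + b) * dq i * dq (Suc i) * (dv i + dv (Suc i))"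
    unfolding dq_def dv_def Vs_def by (simp add: algebra_simps)
  have s: "dq i + dv i = \<tau>" "0 < dq i" "0 \<le> dv i" "dq (Suc i) + dv (Suc i) = \<tau>" "0 < dq (Suc i)" "0 \<le> dv (Suc i)"
    using step_spec[of i] step_spec[of "Suc i"] i by auto
  hence dq_eq: "dq i = \<tau> - dv i" "dq (Suc i) = \<tau> - dv (Suc i)" by linarith+
  have cross: "dq i * dv (Suc i) - dq (Suc i) * dv i = \<tau> * (dv (Suc i) - dv i)"
    unfolding dq_eq by (simp add: algebra_simps)
  have tp': "?q2 * (\<tau> * (dv (Suc i) - dv i)) \<ge> - ((1 + b) * dq i * (dq (Suc i) * (dv i + dv (Suc i))))"
    using tp unfolding cross by (simp add: algebra_simps)
  have "dq (Suc i) * (dv i + dv (Suc i)) \<le> \<tau> * (2 * \<tau>)"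
    using s by (intro mult_mono) auto
  hence "(1 + b) * dq i * (dq (Suc i) * (dv i + dv (Suc i))) \<le> (1 + b) * dq i * (\<tau> * (2 * \<tau>))"
    using s b_nonneg by (intro mult_left_mono) auto
  hence "?q2 * (\<tau> * (dv (Suc i) - dv i)) \<ge> - ((1 + b) * dq i * (\<tau> * (2 * \<tau>)))"
    using tp' by linarith
  hence "\<tau> * (?q2 * (dv (Suc i) - dv i)) \<ge> \<tau> * (- 2 * (1 + b) * \<tau> * dq i)"
    by (simp add: algebra_simps)
  thus ?thesis using \<tau>_pos by simp
qed

lemma \<alpha>_turn:
  assumes i: "Suc (Suc i) \<le> N"
  shows "\<alpha> i - \<alpha> (Suc i) \<le> 2 * (1 + b) * (ln (qs (Suc i)) - ln (qs i))"
proof -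
  define L where "L = ln (qs (Suc i)) - ln (qs i)"
  have q2: "0 < qs (Suc i)" using qs_bounds i by simp
  have "dq i \<le> qs (Suc i) * L" using dq_le_ln[of i] q2 i unfolding L_def
    by (simp add: pos_divide_le_eq mult.commute)
  hence "- 2 * (1 + b) * \<tau> * dq i \<ge> qs (Suc i) * (- 2 * (1 + b) * \<tau> * L)"
    using b_nonneg \<tau>_pos mult_left_mono[of "dq i" "qs (Suc i) * L" "2 * (1 + b) * \<tau>"] by (simp add: algebra_simps)
  hence "qs (Suc i) * (dv (Suc i) - dv i) \<ge> qs (Suc i) * (- 2 * (1 + b) * \<tau> * L)"
    using dv_turn[OF i] by linarith
  hence "qs (Suc i) * (\<tau> * (- 2 * (1 + b) * L)) \<le> qs (Suc i) * (dv (Suc i) - dv i)"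
    by (simp add: algebra_simps)
  hence "\<tau> * (- 2 * (1 + b) * L) \<le> dv (Suc i) - dv i"
    using mult_le_cancel_left_pos[OF q2] by blast
  hence "- 2 * (1 + b) * L \<le> (dv (Suc i) - dv i) / \<tau>"
    using \<tau>_pos by (simp add: pos_le_divide_eq mult.commute)
  thus ?thesis unfolding \<alpha>_def L_def diff_divide_distrib by linarith
qed

end

section \<open>Choice of the knots\<close>

lemma card_floor_changes_le:
  fixes f :: "nat \<Rightarrow> real"
  assumes mono: "\<And>i. f i \<le> f (Suc i)"
  shows "real (card {i\<in>{1..n}. \<lfloor>f i\<rfloor> \<noteq> \<lfloor>f (i - 1)\<rfloor>}) \<le> of_int \<lfloor>f n\<rfloor> - of_int \<lfloor>f 0\<rfloor>"
proof (induction n)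
  case (Suc n)
  let ?A = "\<lambda>n. {i\<in>{1..n}. \<lfloor>f i\<rfloor> \<noteq> \<lfloor>f (i - 1)\<rfloor>}"
  show ?case
  proof (cases "\<lfloor>f (Suc n)\<rfloor> = \<lfloor>f n\<rfloor>")
    case True
    hence "?A (Suc n) = ?A n" by (auto simp: le_Suc_eq)
    thus ?thesis using Suc True by simp
  next
    case False
    hence "?A (Suc n) = insert (Suc n) (?A n)" by (auto simp: le_Suc_eq)
    hence "card (?A (Suc n)) = Suc (card (?A n))" by simp
    moreover have "\<lfloor>f n\<rfloor> + 1 \<le> \<lfloor>f (Suc n)\<rfloor>" using floor_mono[OF mono[of n]] False by simp
    ultimately show ?thesis using Suc by simp
  qed
qed simp

lemma card_multiples_le: "card {i. i \<le> (n::nat) \<and> s dvd i} \<le> n div s + 1"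
proof -
  have "{i. i \<le> n \<and> s dvd i} \<subseteq> (\<lambda>k. s * k) ` {0..n div s}"
  proof
    fix i assume "i \<in> {i. i \<le> n \<and> s dvd i}"
    then obtain k where "i = s * k" "s * k \<le> n" by auto
    moreover have "s \<noteq> 0 \<Longrightarrow> k \<le> n div s" using div_le_mono[OF \<open>s * k \<le> n\<close>, of s] by simp
    ultimately show "i \<in> (\<lambda>k. s * k) ` {0..n div s}" by (cases "s = 0") auto
  qed
  hence "card {i. i \<le> n \<and> s dvd i} \<le> card ((\<lambda>k. s * k) ` {0..n div s})"
    by (intro card_mono) auto
  also have "\<dots> \<le> card {0..n div s}" by (rule card_image_le) auto
  finally show ?thesis by simp
qed

lemma floor_eq_imp_dist_less_1:
  assumes "\<lfloor>x::real\<rfloor> = \<lfloor>y\<rfloor>"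
  shows "\<bar>x - y\<bar> < 1"
proof -
  have "of_int \<lfloor>x\<rfloor> \<le> x" "x < of_int \<lfloor>x\<rfloor> + 1" "of_int \<lfloor>y\<rfloor> \<le> y" "y < of_int \<lfloor>y\<rfloor> + 1"
    using floor_correct[of x] floor_correct[of y] by auto
  moreover have "real_of_int \<lfloor>x\<rfloor> = real_of_int \<lfloor>y\<rfloor>" using assms by simp
  ultimately show ?thesis unfolding abs_less_iff by linarith
qed

context sampling
begin

definition neg_var :: "nat \<Rightarrow> real" where "neg_var n = (\<Sum>k<n. max 0 (\<alpha> k - \<alpha> (Suc k)))"
definition pos_var :: "nat \<Rightarrow> real" where "pos_var n = (\<Sum>k<n. max 0 (\<alpha> (Suc k) - \<alpha> k))"
definition var_bound :: real where "var_bound = 2 * (1 + b) * ln (1 / c)"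

lemma \<alpha>_eq_variation: "\<alpha> n = \<alpha> 0 + pos_var n - neg_var n"
  by (induction n) (auto simp: neg_var_def pos_var_def)

lemma neg_var_Suc_mono: "neg_var n \<le> neg_var (Suc n)"
  and pos_var_Suc_mono: "pos_var n \<le> pos_var (Suc n)"
  unfolding neg_var_def pos_var_def by auto

lemma neg_var_le_ln: "Suc n \<le> N \<Longrightarrow> neg_var n \<le> 2 * (1 + b) * (ln (qs n) - ln (qs 0))"
proof (induction n)
  case (Suc n)
  have drop: "\<alpha> n - \<alpha> (Suc n) \<le> 2 * (1 + b) * (ln (qs (Suc n)) - ln (qs n))"
    using \<alpha>_turn[of n] Suc.prems by simp
  have "ln (qs n) \<le> ln (qs (Suc n))" using qs_mono[of n "Suc n"] qs_bounds[of n] Suc.prems by simp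
  hence "0 \<le> 2 * (1 + b) * (ln (qs (Suc n)) - ln (qs n))" using b_nonneg by simp
  hence "neg_var (Suc n) \<le> neg_var n + 2 * (1 + b) * (ln (qs (Suc n)) - ln (qs n))"
    using drop unfolding neg_var_def by simp
  also have "\<dots> \<le> 2 * (1 + b) * (ln (qs n) - ln (qs 0)) + 2 * (1 + b) * (ln (qs (Suc n)) - ln (qs n))"
    using Suc by simp
  finally show ?case by (simp add: algebra_simps)
qed (simp add: neg_var_def)

lemma neg_var_le: "n < N \<Longrightarrow> neg_var n \<le> var_bound"
proof -
  assume n: "n < N"
  have "neg_var n \<le> 2 * (1 + b) * (ln (qs n) - ln (qs 0))" using neg_var_le_ln n by simp
  also have "\<dots> \<le> 2 * (1 + b) * ln (1 / c)"
    using qs_bounds[of n] n qs_0 c_bounds b_nonneg by (intro mult_left_mono) (auto simp: ln_div)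
  finally show ?thesis unfolding var_bound_def .
qed

lemma pos_var_le: "n < N \<Longrightarrow> pos_var n \<le> var_bound + 1"
  using \<alpha>_eq_variation[of n] neg_var_le[of n] \<alpha>_bounds[of n] \<alpha>_bounds[of 0] by linarith

definition width :: nat where "width = nat \<lceil>1 / sqrt e\<rceil>"

definition pos_crossings :: "nat set" where
  "pos_crossings = {i\<in>{1..N-1}. \<lfloor>real width * pos_var i\<rfloor> \<noteq> \<lfloor>real width * pos_var (i - 1)\<rfloor>}"
definition neg_crossings :: "nat set" where
  "neg_crossings = {i\<in>{1..N-1}. \<lfloor>real width * neg_var i\<rfloor> \<noteq> \<lfloor>real width * neg_var (i - 1)\<rfloor>}"
text \<open>With knots at the indices in \<open>J\<close>, \<open>\<alpha>\<close> varies by at most \<open>2 / width\<close> between consecutive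
  knots, and consecutive knots are at most \<open>width\<close> samples apart.\<close>
definition J :: "nat set" where
  "J = {0, N} \<union> {i. i \<le> N \<and> width dvd i} \<union> pos_crossings \<union> neg_crossings"

lemma width_bounds: "1 \<le> width" "1 / sqrt e \<le> real width" "real width \<le> 1 / sqrt e + 1"
proof -
  have "sqrt e < 1" using e_less_half by simp
  hence "1 < 1 / sqrt e" using e_pos by simp
  thus "1 \<le> width" "1 / sqrt e \<le> real width" "real width \<le> 1 / sqrt e + 1"
    unfolding width_def by linarith+
qed

lemma card_pos_crossings: "real (card pos_crossings) \<le> real width * (var_bound + 1)"
proof -
  have "real (card pos_crossings) \<le> of_int \<lfloor>real width * pos_var (N - 1)\<rfloor> - of_int \<lfloor>real width * pos_var 0\<rfloor>"
    unfolding pos_crossings_def by (rule card_floor_changes_le) (intro mult_left_mono pos_var_Suc_mono, simp)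
  also have "\<dots> \<le> real width * pos_var (N - 1)" by (simp add: pos_var_def)
  also have "\<dots> \<le> real width * (var_bound + 1)"
    using pos_var_le[of "N - 1"] N_bounds by (intro mult_left_mono) auto
  finally show ?thesis .
qed

lemma card_neg_crossings: "real (card neg_crossings) \<le> real width * var_bound"
proof -
  have "real (card neg_crossings) \<le> of_int \<lfloor>real width * neg_var (N - 1)\<rfloor> - of_int \<lfloor>real width * neg_var 0\<rfloor>"
    unfolding neg_crossings_def by (rule card_floor_changes_le) (intro mult_left_mono neg_var_Suc_mono, simp)
  also have "\<dots> \<le> real width * neg_var (N - 1)" by (simp add: neg_var_def)
  also have "\<dots> \<le> real width * var_bound"
    using neg_var_le[of "N - 1"] N_bounds by (intro mult_left_mono) auto
  finally show ?thesis .
qed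

lemma J_subset: "J \<subseteq> {0..N}"
  unfolding J_def pos_crossings_def neg_crossings_def by auto

lemma endpoints_in_J: "0 \<in> J" "N \<in> J"
  unfolding J_def by simp_all

lemma finite_J: "finite J"
  using J_subset by (rule finite_subset) auto

lemma card_J: "real (card J) \<le> 3 + real (N div width) + real width * (2 * var_bound + 1)"
proof -
  let ?A = "{0, N}" and ?B = "{i. i \<le> N \<and> width dvd i}"
  have "card J \<le> card (?A \<union> ?B \<union> pos_crossings) + card neg_crossings"
    unfolding J_def by (rule card_Un_le)
  also have "\<dots> \<le> card (?A \<union> ?B) + card pos_crossings + card neg_crossings"
    using card_Un_le[of "?A \<union> ?B" pos_crossings] by simp
  also have "\<dots> \<le> card ?A + card ?B + card pos_crossings + card neg_crossings"
    using card_Un_le[of ?A ?B] by simp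
  also have "\<dots> \<le> 2 + (N div width + 1) + card pos_crossings + card neg_crossings"
    using card_multiples_le[of N width] by (intro add_right_mono add_mono) (auto simp: card_insert_if)
  finally have "real (card J) \<le> 3 + real (N div width) + real (card pos_crossings) + real (card neg_crossings)"
    by linarith
  moreover have "real width * (2 * var_bound + 1) = real width * (var_bound + 1) + real width * var_bound"
    by (simp add: algebra_simps)
  ultimately show ?thesis using card_pos_crossings card_neg_crossings by linarith
qed

end

lemma sum_deviation_le:
  fixes D :: "nat \<Rightarrow> real"
  assumes "\<And>k. k \<in> {i..<j} \<Longrightarrow> \<bar>D k - r\<bar> \<le> d"
  shows "\<bar>(\<Sum>k\<in>{i..<j}. D k) - real (j - i) * r\<bar> \<le> real (j - i) * d"
proof -
  have "\<bar>(\<Sum>k\<in>{i..<j}. D k) - real (j - i) * r\<bar> = \<bar>\<Sum>k\<in>{i..<j}. D k - r\<bar>"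
    by (simp add: sum_subtractf)
  also have "\<dots> \<le> (\<Sum>k\<in>{i..<j}. d)" using assms by (intro order_trans[OF sum_abs sum_mono]) auto
  finally show ?thesis by simp
qed

text \<open>If the increments \<open>D p\<close>, \<open>D n\<close> of a function over \<open>p \<le> n\<close> steps are within \<open>p d\<close>, \<open>n d\<close> of
  linear growth at rate \<open>r\<close>, its graph stays within \<open>2 p d\<close> of the chord.\<close>
lemma chord_deviation_le:
  fixes Dp Dn r d :: real
  assumes "\<bar>Dp - real p * r\<bar> \<le> real p * d" "\<bar>Dn - real n * r\<bar> \<le> real n * d" "0 < n"
  shows "\<bar>- Dp + real p / real n * Dn\<bar> \<le> 2 * real p * d"
proof -
  have "- Dp + real p / real n * Dn = - (Dp - real p * r) + real p / real n * (Dn - real n * r)"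
    using assms(3) by (simp add: algebra_simps)
  also have "\<bar>\<dots>\<bar> \<le> \<bar>Dp - real p * r\<bar> + real p / real n * \<bar>Dn - real n * r\<bar>"
    using abs_triangle_ineq[of "- (Dp - real p * r)" "real p / real n * (Dn - real n * r)"]
      abs_minus_commute[of Dp "real p * r"] by (simp add: abs_mult)
  also have "\<dots> \<le> real p * d + real p / real n * (real n * d)"
    using assms by (intro add_mono mult_left_mono) auto
  also have "\<dots> = 2 * real p * d" using assms(3) by (simp add: field_simps)
  finally show ?thesis .
qed

context sampling
begin

definition K :: nat where "K = card J - 1"
definition knot_idx :: "nat \<Rightarrow> nat" where "knot_idx m = sorted_list_of_set J ! m"

lemma Suc_K: "Suc K = card J"
proof -
  have "{0, N} \<subseteq> J" using endpoints_in_J by simp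
  moreover have "card {0, N} = 2" using N_bounds by simp
  ultimately have "2 \<le> card J" using card_mono[OF finite_J] by metis
  thus ?thesis unfolding K_def by simp
qed

lemma knot_idx_strict_mono: "x < y \<Longrightarrow> y \<le> K \<Longrightarrow> knot_idx x < knot_idx y"
  unfolding knot_idx_def using sorted_wrt_nth_less[OF strict_sorted_list_of_set, of x y J] Suc_K by simp

lemma knot_idx_less_iff: "x \<le> K \<Longrightarrow> y \<le> K \<Longrightarrow> knot_idx x < knot_idx y \<longleftrightarrow> x < y"
  using knot_idx_strict_mono[of x y] knot_idx_strict_mono[of y x] by (cases x y rule: linorder_cases) auto

lemma sorted_list_of_J: "set (sorted_list_of_set J) = J" "length (sorted_list_of_set J) = Suc K"
  using finite_J Suc_K by auto

lemma knot_idx_in_J: "m \<le> K \<Longrightarrow> knot_idx m \<in> J"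
  unfolding knot_idx_def using sorted_list_of_J by (metis less_Suc_eq_le nth_mem)

lemma J_eq_knot_idx: "i \<in> J \<Longrightarrow> \<exists>m\<le>K. knot_idx m = i"
  unfolding knot_idx_def using sorted_list_of_J by (metis in_set_conv_nth less_Suc_eq_le)

lemma knot_idx_le: "m \<le> K \<Longrightarrow> knot_idx m \<le> N"
  by (meson J_subset atLeastAtMost_iff knot_idx_in_J subsetD)

lemma knot_idx_0: "knot_idx 0 = 0"
proof -
  obtain m where "m \<le> K" "knot_idx m = 0" using J_eq_knot_idx[OF endpoints_in_J(1)] by blast
  moreover have "\<not> knot_idx 0 < 0" by simp
  ultimately show ?thesis using knot_idx_strict_mono[of 0 m] by (cases "m = 0") simp_all
qed

lemma knot_idx_K: "knot_idx K = N"
proof -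
  obtain m where m: "m \<le> K" "knot_idx m = N" using J_eq_knot_idx[OF endpoints_in_J(2)] by blast
  moreover have "\<not> N < knot_idx K" using knot_idx_le[of K] by simp
  ultimately show ?thesis using knot_idx_strict_mono[of m K] by (cases "m = K") simp_all
qed

lemma not_in_J_between_knots:
  assumes "m < K" "knot_idx m < i" "i < knot_idx (Suc m)"
  shows "i \<notin> J"
proof
  assume "i \<in> J"
  then obtain k where k: "k \<le> K" "knot_idx k = i" using J_eq_knot_idx by blast
  have "m < k" "k < Suc m" using knot_idx_less_iff[of m k] knot_idx_less_iff[of k "Suc m"] assms k by auto
  thus False by simp
qed

lemma knot_gap_le: "m < K \<Longrightarrow> knot_idx (Suc m) - knot_idx m \<le> width"
proof (rule ccontr)
  assume m: "m < K" and gap: "\<not> knot_idx (Suc m) - knot_idx m \<le> width"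
  define i where "i = width * (knot_idx m div width + 1)"
  have "width * (knot_idx m div width) + knot_idx m mod width = knot_idx m" "knot_idx m mod width < width"
    using width_bounds by simp_all
  moreover have "i = width * (knot_idx m div width) + width" unfolding i_def by simp
  ultimately have "knot_idx m < i" "i \<le> knot_idx m + width" by linarith+
  hence "knot_idx m < i" "i < knot_idx (Suc m)" "i \<le> N" using gap knot_idx_le[of "Suc m"] m by auto
  moreover have "width dvd i" unfolding i_def by simp
  ultimately show False using not_in_J_between_knots[OF m] unfolding J_def by blast
qed

lemma variation_floors_between_knots:
  assumes m: "m < K" and k: "knot_idx m \<le> k" "k < knot_idx (Suc m)"
  shows "\<lfloor>real width * pos_var k\<rfloor> = \<lfloor>real width * pos_var (knot_idx m)\<rfloor> \<and>
         \<lfloor>real width * neg_var k\<rfloor> = \<lfloor>real width * neg_var (knot_idx m)\<rfloor>"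
  using k
proof (induction k)
  case (Suc k)
  show ?case
  proof (cases "knot_idx m = Suc k")
    case False
    hence "Suc k \<notin> J" "knot_idx m \<le> k" "Suc k \<le> N - 1"
      using not_in_J_between_knots[OF m, of "Suc k"] Suc.prems knot_idx_le[of "Suc m"] m by auto
    thus ?thesis using Suc unfolding J_def pos_crossings_def neg_crossings_def by auto
  qed simp
qed simp

lemma \<alpha>_near_knot:
  assumes m: "m < K" and k: "knot_idx m \<le> k" "k < knot_idx (Suc m)"
  shows "\<bar>\<alpha> k - \<alpha> (knot_idx m)\<bar> \<le> 2 / real width"
proof -
  have "\<bar>real width * pos_var k - real width * pos_var (knot_idx m)\<bar> < 1"
       "\<bar>real width * neg_var k - real width * neg_var (knot_idx m)\<bar> < 1"
    using variation_floors_between_knots[OF assms] floor_eq_imp_dist_less_1 by blast+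
  hence "real width * \<bar>pos_var k - pos_var (knot_idx m)\<bar> < 1" "real width * \<bar>neg_var k - neg_var (knot_idx m)\<bar> < 1"
    by (simp_all only: right_diff_distrib[symmetric] abs_mult abs_of_nat)
  hence "\<bar>pos_var k - pos_var (knot_idx m)\<bar> \<le> 1 / real width" "\<bar>neg_var k - neg_var (knot_idx m)\<bar> \<le> 1 / real width"
    using width_bounds by (simp_all add: pos_le_divide_eq mult.commute)
  thus ?thesis using \<alpha>_eq_variation[of k] \<alpha>_eq_variation[of "knot_idx m"] by (simp add: abs_le_iff)
qed

lemma Vs_drop_near_linear:
  assumes m: "m < K" and i: "knot_idx m \<le> i" "i \<le> knot_idx (Suc m)"
  shows "\<bar>(Vs (knot_idx m) - Vs i) - real (i - knot_idx m) * (\<tau> * \<alpha> (knot_idx m))\<bar>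
    \<le> real (i - knot_idx m) * (\<tau> * (2 / real width))"
proof -
  let ?j = "knot_idx m"
  have "Vs ?j - Vs i = (\<Sum>k\<in>{?j..<i}. dv k)"
    using sum_Suc_diff'[of ?j i "\<lambda>k. - Vs k"] i unfolding dv_def by simp
  moreover have "\<bar>dv k - \<tau> * \<alpha> ?j\<bar> \<le> \<tau> * (2 / real width)" if "k \<in> {?j..<i}" for k
  proof -
    have "dv k - \<tau> * \<alpha> ?j = \<tau> * (\<alpha> k - \<alpha> ?j)"
      using \<tau>_pos unfolding \<alpha>_def by (simp add: right_diff_distrib)
    hence "\<bar>dv k - \<tau> * \<alpha> ?j\<bar> = \<tau> * \<bar>\<alpha> k - \<alpha> ?j\<bar>"
      using \<tau>_pos by (simp add: abs_mult)
    also have "\<dots> \<le> \<tau> * (2 / real width)"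
      using \<alpha>_near_knot[OF m, of k] that i \<tau>_pos by (intro mult_left_mono) auto
    finally show ?thesis .
  qed
  ultimately show ?thesis using sum_deviation_le by metis
qed

lemma samples_near_chord:
  assumes m: "m < K" and i: "knot_idx m \<le> i" "i \<le> knot_idx (Suc m)"
  defines "t \<equiv> real (i - knot_idx m) / real (knot_idx (Suc m) - knot_idx m)"
  shows "\<bar>qs i - (qs (knot_idx m) + t * (qs (knot_idx (Suc m)) - qs (knot_idx m)))\<bar> \<le> 4 * \<tau>"
    and "\<bar>Vs i - (Vs (knot_idx m) + t * (Vs (knot_idx (Suc m)) - Vs (knot_idx m)))\<bar> \<le> 4 * \<tau>"
proof -
  let ?j0 = "knot_idx m" and ?j1 = "knot_idx (Suc m)"
  define p where "p = i - ?j0"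
  define n where "n = ?j1 - ?j0"
  have j: "?j0 < ?j1" "?j1 \<le> N" using knot_idx_strict_mono knot_idx_le m by auto
  have n: "0 < n" "p \<le> n" "n \<le> width" using j i knot_gap_le[OF m] unfolding p_def n_def by auto
  have "\<bar>- (Vs ?j0 - Vs i) + t * (Vs ?j0 - Vs ?j1)\<bar> \<le> 2 * real p * (\<tau> * (2 / real width))"
    unfolding t_def p_def[symmetric] n_def[symmetric]
    by (rule chord_deviation_le) (use Vs_drop_near_linear[OF m] i j n in \<open>auto simp: p_def n_def\<close>)
  also have "\<dots> \<le> 2 * real width * (\<tau> * (2 / real width))"
    using n \<tau>_pos by (intro mult_right_mono) auto
  finally have dev: "\<bar>- (Vs ?j0 - Vs i) + t * (Vs ?j0 - Vs ?j1)\<bar> \<le> 4 * \<tau>"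
    using width_bounds by simp
  have "qs i = qs ?j0 + real p * \<tau> - (Vs ?j0 - Vs i)" "qs ?j1 = qs ?j0 + real n * \<tau> - (Vs ?j0 - Vs ?j1)"
    using qs_Vs_increment[of ?j0 i] qs_Vs_increment[of ?j0 ?j1] i j unfolding p_def n_def by auto
  hence "qs i - (qs ?j0 + t * (qs ?j1 - qs ?j0))
      = - (Vs ?j0 - Vs i) + t * (Vs ?j0 - Vs ?j1) + (real p - t * real n) * \<tau>"
    by (simp only:) (simp add: algebra_simps)
  moreover have "t * real n = real p" unfolding t_def p_def n_def using n(1) n_def by simp
  ultimately have "qs i - (qs ?j0 + t * (qs ?j1 - qs ?j0)) = - (Vs ?j0 - Vs i) + t * (Vs ?j0 - Vs ?j1)"
    by simp
  thus "\<bar>qs i - (qs ?j0 + t * (qs ?j1 - qs ?j0))\<bar> \<le> 4 * \<tau>" using dev by simp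
  have "Vs i - (Vs ?j0 + t * (Vs ?j1 - Vs ?j0)) = - (Vs ?j0 - Vs i) + t * (Vs ?j0 - Vs ?j1)"
    by (simp add: algebra_simps)
  thus "\<bar>Vs i - (Vs ?j0 + t * (Vs ?j1 - Vs ?j0))\<bar> \<le> 4 * \<tau>" using dev by simp
qed

end

section \<open>Piecewise linear interpolation\<close>

text \<open>Outside the knots the interpolant is \<open>1\<close> on the left and \<open>0\<close> on the right, the extreme values of
  an upper quantile function of a distribution on \<open>[0, 1]\<close>.\<close>
definition pwl :: "nat \<Rightarrow> (nat \<Rightarrow> real \<times> real) \<Rightarrow> real \<Rightarrow> real" where
  "pwl K f q = (if q < fst (f 0) then 1 else 0) +
     (\<Sum>m<K. if fst (f m) \<le> q \<and> q < fst (f (Suc m))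
        then snd (f m) + (q - fst (f m)) / (fst (f (Suc m)) - fst (f m)) * (snd (f (Suc m)) - snd (f m))
        else 0)"

lemma pwl_cong: "(\<And>m. m \<le> K \<Longrightarrow> f m = g m) \<Longrightarrow> pwl K f q = pwl K g q"
  unfolding pwl_def by (intro arg_cong2[where f="(+)"] sum.cong) auto

lemma pwl_reflect_measurable: "(\<lambda>x. pwl K f (1 - x)) \<in> borel_measurable borel"
  unfolding pwl_def by measurable

context
  fixes K :: nat and f :: "nat \<Rightarrow> real \<times> real"
  assumes knots_mono: "\<And>x y. x \<le> y \<Longrightarrow> y \<le> K \<Longrightarrow> fst (f x) \<le> fst (f y)"
begin

lemma pwl_below:
  assumes "q < fst (f 0)"
  shows "pwl K f q = 1"
proof -
  have "\<not> fst (f m) \<le> q" if "m < K" for m using knots_mono[of 0 m] that assms by simp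
  thus ?thesis unfolding pwl_def using assms by simp
qed

lemma pwl_above:
  assumes "fst (f K) \<le> q"
  shows "pwl K f q = 0"
proof -
  have "\<not> q < fst (f (Suc m))" if "m < K" for m using knots_mono[of "Suc m" K] that assms by simp
  moreover have "\<not> q < fst (f 0)" using knots_mono[of 0 K] assms by simp
  ultimately show ?thesis unfolding pwl_def by simp
qed

lemma pwl_on_piece:
  assumes m: "m < K" and q: "fst (f m) \<le> q" "q < fst (f (Suc m))"
  shows "pwl K f q = snd (f m) + (q - fst (f m)) / (fst (f (Suc m)) - fst (f m)) * (snd (f (Suc m)) - snd (f m))"
proof -
  let ?g = "\<lambda>m'. if fst (f m') \<le> q \<and> q < fst (f (Suc m'))
    then snd (f m') + (q - fst (f m')) / (fst (f (Suc m')) - fst (f m')) * (snd (f (Suc m')) - snd (f m'))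
    else 0"
  have "?g m' = 0" if "m' \<in> {..<K} - {m}" for m'
  proof (cases "m' < m")
    case True
    thus ?thesis using knots_mono[of "Suc m'" m] m q by auto
  next
    case False
    thus ?thesis using knots_mono[of "Suc m" m'] that q by auto
  qed
  hence "(\<Sum>m'<K. ?g m') = ?g m"
    using m by (intro sum.mono_neutral_right[where S="{m}", simplified]) auto
  moreover have "\<not> q < fst (f 0)" using knots_mono[of 0 m] m q by simp
  ultimately show ?thesis unfolding pwl_def using q by simp
qed

lemma exists_piece:
  assumes "fst (f 0) \<le> q" "q < fst (f K)"
  obtains m where "m < K" "fst (f m) \<le> q" "q < fst (f (Suc m))"
proof -
  define m where "m = Max {m. m \<le> K \<and> fst (f m) \<le> q}"
  have fin: "finite {m. m \<le> K \<and> fst (f m) \<le> q}" "0 \<in> {m. m \<le> K \<and> fst (f m) \<le> q}"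
    using assms by auto
  hence m: "m \<le> K" "fst (f m) \<le> q" unfolding m_def using Max_in[OF fin(1)] by blast+
  hence "m < K" using assms by (cases "m = K") auto
  moreover have "\<not> Suc m \<le> m" by simp
  hence "q < fst (f (Suc m))" using Max_ge[OF fin(1), of "Suc m"] \<open>m < K\<close> unfolding m_def[symmetric] by force
  ultimately show ?thesis using that m by blast
qed

end

lemma interpolation_perturbation:
  fixes a0 a1 A0 A1 t t' n \<tau> \<rho> X :: real
  assumes "\<bar>a0 - A0\<bar> \<le> \<rho>" "\<bar>a1 - A1\<bar> \<le> \<rho>" "0 \<le> t" "t \<le> 1"
    "\<bar>t - t'\<bar> \<le> 1 / n" "\<bar>A1 - A0\<bar> \<le> n * \<tau>" "0 < n"
    "\<bar>X - (A0 + t' * (A1 - A0))\<bar> \<le> 4 * \<tau>"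
  shows "\<bar>(a0 + t * (a1 - a0)) - X\<bar> \<le> \<rho> + 5 * \<tau>"
proof -
  have "\<bar>(1 - t) * (a0 - A0)\<bar> \<le> (1 - t) * \<rho>" "\<bar>t * (a1 - A1)\<bar> \<le> t * \<rho>"
    using assms by (simp_all add: abs_mult mult_left_mono)
  hence "\<bar>(1 - t) * (a0 - A0) + t * (a1 - A1)\<bar> \<le> (1 - t) * \<rho> + t * \<rho>"
    using abs_triangle_ineq[of "(1 - t) * (a0 - A0)" "t * (a1 - A1)"] by linarith
  hence "\<bar>a0 + t * (a1 - a0) - (A0 + t * (A1 - A0))\<bar> \<le> \<rho>" by (simp add: algebra_simps)
  moreover have "\<bar>(t - t') * (A1 - A0)\<bar> \<le> (1 / n) * (n * \<tau>)"
    unfolding abs_mult using assms by (intro mult_mono) auto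
  hence "\<bar>(A0 + t * (A1 - A0)) - (A0 + t' * (A1 - A0))\<bar> \<le> \<tau>"
    using assms by (simp add: algebra_simps)
  ultimately show ?thesis using assms(8) by linarith
qed

context sampling
begin

definition \<rho> :: real where "\<rho> = e / 8"
definition grid_round :: "real \<Rightarrow> real" where "grid_round x = \<rho> * of_int \<lfloor>x / \<rho>\<rfloor>"
definition knot :: "nat \<Rightarrow> real \<times> real" where
  "knot m = (grid_round (qs (knot_idx m)), grid_round (Vs (knot_idx m)))"

lemma \<rho>_pos: "0 < \<rho>" unfolding \<rho>_def using e_pos by simp

lemma grid_round_le: "grid_round x \<le> x" and grid_round_gt: "x - \<rho> < grid_round x"
proof -
  have "of_int \<lfloor>x / \<rho>\<rfloor> \<le> x / \<rho>" "x / \<rho> < of_int \<lfloor>x / \<rho>\<rfloor> + 1" by linarith+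
  hence "\<rho> * of_int \<lfloor>x / \<rho>\<rfloor> \<le> \<rho> * (x / \<rho>)" "\<rho> * (x / \<rho>) < \<rho> * (of_int \<lfloor>x / \<rho>\<rfloor> + 1)"
    using \<rho>_pos by (intro mult_left_mono mult_strict_left_mono; simp)+
  thus "grid_round x \<le> x" "x - \<rho> < grid_round x"
    unfolding grid_round_def using \<rho>_pos by (simp_all add: algebra_simps)
qed

lemma grid_round_mono: "x \<le> y \<Longrightarrow> grid_round x \<le> grid_round y"
  unfolding grid_round_def using \<rho>_pos by (intro mult_left_mono) (auto intro!: floor_mono divide_right_mono)

lemma grid_round_dist: "\<bar>grid_round x - x\<bar> \<le> \<rho>"
  using grid_round_le[of x] grid_round_gt[of x] by simp

lemma knot_fst_mono: "x \<le> y \<Longrightarrow> y \<le> K \<Longrightarrow> fst (knot x) \<le> fst (knot y)"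
  unfolding knot_def using knot_idx_strict_mono[of x y] knot_idx_le[of y]
  by (cases "x = y") (auto intro!: grid_round_mono qs_mono)

lemma knot_fst_0: "fst (knot 0) \<le> c"
  unfolding knot_def using knot_idx_0 qs_0 grid_round_le by simp

lemma knot_fst_K: "1 - e < fst (knot K)"
  using grid_round_gt[of "1 - c"] e_pos unfolding knot_def knot_idx_K qs_N c_def \<rho>_def by simp

lemma pwl_near_sample:
  assumes m: "m < K" and q: "fst (knot m) \<le> q" "q < fst (knot (Suc m))"
  shows "\<exists>i\<le>N. \<bar>q - qs i\<bar> \<le> e / 2 \<and> \<bar>pwl K knot q - Vs i\<bar> \<le> e / 2"
proof -
  let ?j0 = "knot_idx m" and ?j1 = "knot_idx (Suc m)"
  define t where "t = (q - fst (knot m)) / (fst (knot (Suc m)) - fst (knot m))"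
  define n where "n = ?j1 - ?j0"
  define p where "p = nat \<lfloor>t * real n\<rfloor>"
  have j: "?j0 < ?j1" "?j1 \<le> N" using knot_idx_strict_mono knot_idx_le m by auto
  have n: "0 < n" unfolding n_def using j by simp
  have t: "0 \<le> t" "t < 1" unfolding t_def using q by (auto simp: divide_less_eq)
  have "real p = of_int \<lfloor>t * real n\<rfloor>" unfolding p_def using t n by simp
  hence "real p \<le> t * real n" "t * real n < real p + 1" by linarith+
  hence "real p / real n \<le> t" "t < real p / real n + 1 / real n" "p \<le> n" using n t
    by (auto simp: divide_le_eq less_divide_eq add_divide_distrib[symmetric] mult.commute)
      (smt (verit) mult_left_le_one_le of_nat_0_le_iff of_nat_le_iff)
  hence tdiff: "\<bar>t - real p / real n\<bar> \<le> 1 / real n" "?j0 \<le> ?j0 + p" "?j0 + p \<le> ?j1"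
    using j unfolding n_def by auto
  have span: "\<bar>qs ?j1 - qs ?j0\<bar> \<le> real n * \<tau>" "\<bar>Vs ?j1 - Vs ?j0\<bar> \<le> real n * \<tau>"
    using increments_bounded[of ?j0 ?j1] j unfolding n_def by auto
  have chord: "\<bar>qs (?j0 + p) - (qs ?j0 + real p / real n * (qs ?j1 - qs ?j0))\<bar> \<le> 4 * \<tau>"
    "\<bar>Vs (?j0 + p) - (Vs ?j0 + real p / real n * (Vs ?j1 - Vs ?j0))\<bar> \<le> 4 * \<tau>"
    using samples_near_chord[OF m tdiff(2,3)] unfolding n_def by auto
  have "\<bar>(fst (knot m) + t * (fst (knot (Suc m)) - fst (knot m))) - qs (?j0 + p)\<bar> \<le> \<rho> + 5 * \<tau>"
    by (rule interpolation_perturbation[OF _ _ t(1) _ tdiff(1) span(1) _ chord(1)])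
       (use grid_round_dist t n in \<open>auto simp: knot_def\<close>)
  moreover have "\<bar>(snd (knot m) + t * (snd (knot (Suc m)) - snd (knot m))) - Vs (?j0 + p)\<bar> \<le> \<rho> + 5 * \<tau>"
    by (rule interpolation_perturbation[OF _ _ t(1) _ tdiff(1) span(2) _ chord(2)])
       (use grid_round_dist t n in \<open>auto simp: knot_def\<close>)
  moreover have "pwl K knot q = snd (knot m) + t * (snd (knot (Suc m)) - snd (knot m))"
    unfolding t_def using pwl_on_piece[OF knot_fst_mono m q] by simp
  moreover have "q = fst (knot m) + t * (fst (knot (Suc m)) - fst (knot m))"
    unfolding t_def using q by simp
  moreover have "\<rho> + 5 * \<tau> \<le> e / 2" "?j0 + p \<le> N" using \<tau>_le e_pos tdiff(3) j unfolding \<rho>_def by auto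
  ultimately show ?thesis by (intro exI[of _ "?j0 + p"]) auto
qed

lemma pwl_knot_cases:
  obtains "pwl K knot q = 1" "q < e"
    | "pwl K knot q = 0" "1 - e < q"
    | i where "i \<le> N" "\<bar>q - qs i\<bar> \<le> e / 2" "\<bar>pwl K knot q - Vs i\<bar> \<le> e / 2"
proof -
  consider "q < fst (knot 0)" | "fst (knot K) \<le> q" | "fst (knot 0) \<le> q" "q < fst (knot K)" by linarith
  thus ?thesis
  proof cases
    case 1
    thus ?thesis using that(1) pwl_below[where K=K and f=knot, OF knot_fst_mono] knot_fst_0 c_bounds e_pos unfolding c_def by force
  next
    case 2
    thus ?thesis using that(2) pwl_above[where K=K and f=knot, OF knot_fst_mono] knot_fst_K by force
  next
    case 3
    then obtain m where "m < K" "fst (knot m) \<le> q" "q < fst (knot (Suc m))"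
      using exists_piece[where K=K and f=knot, OF knot_fst_mono] by blast
    thus ?thesis using that(3) pwl_near_sample by blast
  qed
qed

lemma V_shift_le_pwl: "0 \<le> q \<Longrightarrow> q < 1 - e \<Longrightarrow> V (q + e) \<le> pwl K knot q + e"
proof (cases q rule: pwl_knot_cases)
  case 1
  thus ?thesis if "0 \<le> q" "q < 1 - e" using V_bounds[of "q + e"] that e_pos by simp
next
  case (3 i)
  thus ?thesis if "0 \<le> q" "q < 1 - e"
  proof -
    have "qs i \<le> q + e" "pwl K knot q - Vs i \<ge> - e / 2" using 3 e_pos unfolding abs_le_iff by linarith+
    moreover have "V (q + e) \<le> Vs i"
      unfolding Vs_def using calculation qs_bounds[OF 3(1)] that e_pos by (intro V_antimono) auto
    ultimately show ?thesis using e_pos by linarith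
  qed
qed simp_all

lemma pwl_le_V_shift: "e < q \<Longrightarrow> q \<le> 1 \<Longrightarrow> pwl K knot q \<le> V (q - e) + e"
proof (cases q rule: pwl_knot_cases)
  case 2
  thus ?thesis if "e < q" "q \<le> 1" using V_bounds[of "q - e"] that e_pos by simp
next
  case (3 i)
  thus ?thesis if "e < q" "q \<le> 1"
  proof -
    have "q - e \<le> qs i" "pwl K knot q - Vs i \<le> e / 2" using 3 e_pos unfolding abs_le_iff by linarith+
    moreover have "Vs i \<le> V (q - e)"
      unfolding Vs_def using calculation qs_bounds[OF 3(1)] that e_pos by (intro V_antimono) auto
    ultimately show ?thesis using e_pos by linarith
  qed
qed simp_all

end


section \<open>Decoding into distributions\<close>

lemma levy_dist_le:
  assumes "0 \<le> e" "\<And>v. F (v - e) - e \<le> G v" "\<And>v. G v \<le> F (v + e) + e"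
  shows "levy_dist F G \<le> e"
  unfolding levy_dist_def using assms by (intro cInf_lower) (auto intro: bdd_belowI[where m=0])

definition uniform01 :: "real measure" where "uniform01 = uniform_measure lborel {0..1}"

lemma prob_space_uniform01: "prob_space uniform01"
  unfolding uniform01_def by (intro prob_space_uniform_measure) auto

lemma sets_uniform01 [simp]: "sets uniform01 = sets borel"
  and space_uniform01 [simp]: "space uniform01 = UNIV"
  unfolding uniform01_def by auto

lemma measurable_uniform01: "L \<in> borel_measurable borel \<Longrightarrow> L \<in> borel_measurable uniform01"
  by (metis measurable_cong_sets sets_uniform01)

lemma real_distribution_distr_uniform01:
  "L \<in> borel_measurable borel \<Longrightarrow> real_distribution (distr uniform01 borel L)"
  unfolding real_distribution_def real_distribution_axioms_def
  using prob_space_uniform01 measurable_uniform01 by (auto intro: prob_space.prob_space_distr)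

lemma cdf_distr_uniform01:
  assumes L: "L \<in> borel_measurable borel"
  shows "cdf (distr uniform01 borel L) v = measure lborel ({0..1} \<inter> L -` {..v})"
proof -
  have "cdf (distr uniform01 borel L) v = measure uniform01 (L -` {..v})"
    unfolding cdf_def using measurable_uniform01[OF L] measurable_sets[OF L, of "{..v}"]
    by (subst measure_distr) auto
  also have "\<dots> = measure lborel ({0..1} \<inter> L -` {..v})"
    unfolding uniform01_def using measurable_sets[OF L, of "{..v}"]
    by (subst measure_uniform_measure) (auto simp: emeasure_lborel_Icc_eq)
  finally show ?thesis .
qed

lemma fmeasurable_Icc: "{a..b::real} \<in> fmeasurable lborel"
  unfolding fmeasurable_def by (auto simp: emeasure_lborel_Icc_eq)

context prob_on_unit_interval
begin

lemma cdf_distr_uniform01_le: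
  assumes L: "L \<in> borel_measurable borel" and e: "0 < e"
    and above: "\<And>x. 0 \<le> x \<Longrightarrow> x \<le> 1 \<Longrightarrow> e < x \<Longrightarrow> Q (x - e) \<le> L x + e"
  shows "cdf (distr uniform01 borel L) v \<le> F (v + e) + e"
proof -
  have meas: "{0..1} \<inter> L -` {..v} \<in> sets lborel" using L by auto
  have "{0..1} \<inter> L -` {..v} \<subseteq> {0..min 1 (F (v + e) + e)}"
  proof
    fix x assume x: "x \<in> {0..1} \<inter> L -` {..v}"
    have "\<not> F (v + e) + e < x"
    proof
      assume "F (v + e) + e < x"
      hence "0 < x - e" "x - e \<le> 1" "\<not> x - e \<le> F (v + e)" using x e cdf_nonneg[of "v + e"] by auto
      hence "v + e < Q (x - e)" using quantile_le_iff by (meson not_le)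
      thus False using above[of x] x \<open>0 < x - e\<close> by auto
    qed
    thus "x \<in> {0..min 1 (F (v + e) + e)}" using x by auto
  qed
  hence "cdf (distr uniform01 borel L) v \<le> measure lborel {0..min 1 (F (v + e) + e)}"
    unfolding cdf_distr_uniform01[OF L] by (intro measure_mono_fmeasurable) (use meas fmeasurable_Icc in auto)
  also have "\<dots> \<le> F (v + e) + e" using e cdf_nonneg[of "v + e"] by simp
  finally show ?thesis .
qed

lemma cdf_distr_uniform01_ge:
  assumes L: "L \<in> borel_measurable borel" and e: "0 < e"
    and below: "\<And>x. 0 \<le> x \<Longrightarrow> x \<le> 1 \<Longrightarrow> x < 1 - e \<Longrightarrow> L x \<le> Q (x + e) + e"
  shows "F (v - e) - e \<le> cdf (distr uniform01 borel L) v"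
proof (cases "F (v - e) - e \<le> 0")
  case True
  thus ?thesis unfolding cdf_distr_uniform01[OF L] by (smt (verit) measure_nonneg)
next
  case False
  have meas: "{0..1} \<inter> L -` {..v} \<in> sets lborel" using L by auto
  have "{0..<F (v - e) - e} \<subseteq> {0..1} \<inter> L -` {..v}"
  proof
    fix x assume x: "x \<in> {0..<F (v - e) - e}"
    have "F (v - e) \<le> 1" by (rule cdf_bounded_prob)
    hence "0 < x + e" "x + e \<le> 1" "x + e \<le> F (v - e)" "x < 1 - e" using x e by auto
    hence "Q (x + e) \<le> v - e" using quantile_le_iff by blast
    thus "x \<in> {0..1} \<inter> L -` {..v}" using below[of x] x \<open>x < 1 - e\<close> e by auto
  qed
  hence "measure lborel {0..<F (v - e) - e} \<le> cdf (distr uniform01 borel L) v"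
    unfolding cdf_distr_uniform01[OF L]
    by (intro measure_mono_fmeasurable) (use meas in \<open>auto intro: fmeasurableI2[OF fmeasurable_Icc[of 0 1]]\<close>)
  thus ?thesis using False by simp
qed

end

context sampling
begin

lemma levy_dist_pwl_le: "levy_dist F (cdf (distr uniform01 borel (\<lambda>x. pwl K knot (1 - x)))) \<le> e"
proof (rule levy_dist_le)
  show "cdf (distr uniform01 borel (\<lambda>x. pwl K knot (1 - x))) v \<le> F (v + e) + e" for v
  proof (rule cdf_distr_uniform01_le[OF pwl_reflect_measurable e_pos])
    fix x :: real assume "0 \<le> x" "x \<le> 1" "e < x"
    thus "Q (x - e) \<le> pwl K knot (1 - x) + e"
      using V_shift_le_pwl[of "1 - x"] unfolding V_def by (simp add: algebra_simps)
  qed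
  show "F (v - e) - e \<le> cdf (distr uniform01 borel (\<lambda>x. pwl K knot (1 - x))) v" for v
  proof (rule cdf_distr_uniform01_ge[OF pwl_reflect_measurable e_pos])
    fix x :: real assume "0 \<le> x" "x \<le> 1" "x < 1 - e"
    thus "pwl K knot (1 - x) \<le> Q (x + e) + e"
      using pwl_le_V_shift[of "1 - x"] unfolding V_def by (simp add: algebra_simps)
  qed
qed (use e_pos in simp)

end

section \<open>Counting the codes\<close>

lemma inv_sqrt_ln_bounds:
  fixes e :: real
  assumes "0 < e" "e < 1/2"
  shows "1 \<le> 1 / sqrt e" "1 / sqrt e * (1 / sqrt e) = 1 / e" "ln 2 \<le> ln (1 / e)" "2/3 \<le> ln (1 / e)"
    "2/3 \<le> 1 / sqrt e * ln (1 / e)"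
proof -
  show X: "1 \<le> 1 / sqrt e" using assms by (simp add: real_sqrt_le_1_iff)
  show "1 / sqrt e * (1 / sqrt e) = 1 / e" using assms by (simp add: real_sqrt_mult[symmetric])
  have "2 \<le> 1 / e" using assms by (simp add: field_simps)
  thus L: "ln 2 \<le> ln (1 / e)" using assms by (subst ln_le_cancel_iff) auto
  thus L': "2/3 \<le> ln (1 / e)" using ln2_ge_two_thirds by simp
  have "1 * ln (1 / e) \<le> 1 / sqrt e * ln (1 / e)" by (rule mult_right_mono[OF X]) (use L' in simp)
  thus "2/3 \<le> 1 / sqrt e * ln (1 / e)" using L' by linarith
qed

definition grid :: "real \<Rightarrow> real set" where "grid e = (\<lambda>k. e / 8 * real k) ` {0..nat \<lfloor>8 / e\<rfloor>}"

context sampling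
begin

lemma N_div_width_le: "real (N div width) \<le> 32 * (1 / sqrt e) + 1"
proof -
  define X where "X = 1 / sqrt e"
  have X: "1 \<le> X" "X * X = 1 / e" using inv_sqrt_ln_bounds e_pos e_less_half unfolding X_def by auto
  have "32 / e = 32 * (X * X)" unfolding X(2) by simp
  have "real (N div width) \<le> real N / real width" by (rule of_nat_div_le_of_nat)
  also have "\<dots> \<le> (32 / e + 1) / X" using N_bounds width_bounds X e_pos unfolding X_def by (intro frac_le) auto
  also have "\<dots> = 32 * X + 1 / X" unfolding \<open>32 / e = 32 * (X * X)\<close> using X(1) by (simp add: add_divide_distrib)
  also have "\<dots> \<le> 32 * X + 1" using X by simp
  finally show ?thesis unfolding X_def .
qed

lemma var_bound_le: "0 \<le> var_bound" "var_bound \<le> 6 * (1 + b) * ln (1 / e)"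
proof -
  have "ln (1 / c) = 2 * ln 2 + ln (1 / e)"
    unfolding c_def using e_pos ln_realpow[of 2 2] by (simp add: ln_div)
  hence lc: "0 \<le> ln (1 / c)" "ln (1 / c) \<le> 3 * ln (1 / e)"
    using inv_sqrt_ln_bounds[OF e_pos e_less_half] by auto
  thus "0 \<le> var_bound" unfolding var_bound_def using b_nonneg by simp
  have "var_bound \<le> 2 * (1 + b) * (3 * ln (1 / e))"
    unfolding var_bound_def using lc b_nonneg by (intro mult_left_mono) auto
  thus "var_bound \<le> 6 * (1 + b) * ln (1 / e)" by (simp add: algebra_simps)
qed

lemma K_le: "real K \<le> (100 + 24 * b) * (1 / sqrt e) * ln (1 / e)"
proof -
  define X where "X = 1 / sqrt e"
  define L where "L = ln (1 / e)"
  have X: "1 \<le> X" "2/3 \<le> L" "2/3 \<le> X * L"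
    using inv_sqrt_ln_bounds[OF e_pos e_less_half] unfolding X_def L_def by auto
  have "2 * var_bound + 1 \<le> 12 * (1 + b) * L + 2 * L" using var_bound_le X unfolding L_def by linarith
  moreover have "real width \<le> 2 * X" using width_bounds X unfolding X_def by linarith
  ultimately have "real width * (2 * var_bound + 1) \<le> (2 * X) * (12 * (1 + b) * L + 2 * L)"
    using var_bound_le by (intro mult_mono) auto
  moreover have "32 * X \<le> 48 * (X * L)" using mult_left_mono[OF X(2), of X] X by simp
  moreover have "real K \<le> real (card J)" using Suc_K by simp
  ultimately have "real K \<le> 4 + 48 * (X * L) + X * L * (28 + 24 * b)"
    using card_J N_div_width_le unfolding X_def[symmetric] by (simp add: algebra_simps)
  also have "\<dots> \<le> (100 + 24 * b) * X * L" using X by (simp add: algebra_simps)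
  finally show ?thesis unfolding X_def L_def .
qed

lemma grid_round_in_grid: "0 \<le> x \<Longrightarrow> x \<le> 1 \<Longrightarrow> grid_round x \<in> grid e"
proof -
  assume x: "0 \<le> x" "x \<le> 1"
  have "0 \<le> \<lfloor>x / \<rho>\<rfloor>" using x \<rho>_pos by simp
  moreover have "\<lfloor>x / \<rho>\<rfloor> \<le> \<lfloor>8 / e\<rfloor>" unfolding \<rho>_def using x e_pos by (intro floor_mono) (simp add: field_simps)
  ultimately have "nat \<lfloor>x / \<rho>\<rfloor> \<in> {0..nat \<lfloor>8 / e\<rfloor>}" "grid_round x = e / 8 * real (nat \<lfloor>x / \<rho>\<rfloor>)"
    unfolding grid_round_def \<rho>_def by auto
  thus ?thesis unfolding grid_def by blast
qed

lemma knot_in_grid: "m \<le> K \<Longrightarrow> knot m \<in> grid e \<times> grid e"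
  using qs_bounds[of "knot_idx m"] V_bounds[of "qs (knot_idx m)"] knot_idx_le[of m]
  unfolding knot_def Vs_def by (auto intro!: grid_round_in_grid)

end

definition codes :: "real \<Rightarrow> nat \<Rightarrow> (nat \<times> (nat \<Rightarrow> real \<times> real)) set" where
  "codes e n = {0..n} \<times> ({0..n} \<rightarrow>\<^sub>E (grid e \<times> grid e))"

definition decode :: "nat \<times> (nat \<Rightarrow> real \<times> real) \<Rightarrow> real measure" where
  "decode \<kappa> = distr uniform01 borel (\<lambda>x. pwl (fst \<kappa>) (snd \<kappa>) (1 - x))"

definition knot_budget :: "real \<Rightarrow> real \<Rightarrow> nat" where
  "knot_budget \<beta> e = nat \<lceil>(124 + 24 * \<beta>) * (1 / sqrt e) * ln (1 / e)\<rceil>"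

lemma finite_codes: "finite (codes e n)"
  unfolding codes_def grid_def by (intro finite_cartesian_product finite_PiE) auto

lemma card_codes: "card (codes e n) = (n + 1) * (card (grid e) * card (grid e)) ^ (n + 1)"
  unfolding codes_def grid_def by (simp add: card_cartesian_product card_PiE)

lemma real_distribution_decode: "real_distribution (decode \<kappa>)"
  unfolding decode_def by (rule real_distribution_distr_uniform01[OF pwl_reflect_measurable])

lemma card_grid_bounds:
  assumes e: "0 < e" "e < 1/2"
  shows "2 \<le> card (grid e)" "log 2 (card (grid e)) \<le> 8 * ln (1 / e)"
proof -
  have g: "card (grid e) = nat \<lfloor>8 / e\<rfloor> + 1" unfolding grid_def using e by (subst card_image) (auto simp: inj_on_def)
  have "16 \<le> 8 / e" using e by (simp add: field_simps)
  thus g2: "2 \<le> card (grid e)" unfolding g by linarith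
  have "real (card (grid e)) \<le> 8 / e + 1" unfolding g using \<open>16 \<le> 8 / e\<close> by linarith
  also have "\<dots> \<le> 16 * (1 / e)" using e by (simp add: field_simps)
  finally have "ln (card (grid e)) \<le> ln (16 * (1 / e))" using g2 e by (subst ln_le_cancel_iff) auto
  also have "\<dots> = 4 * ln 2 + ln (1 / e)" using e ln_realpow[of 2 4] by (simp add: ln_div)
  finally have "log 2 (card (grid e)) \<le> (4 * ln 2 + ln (1 / e)) / ln 2"
    unfolding log_def by (intro divide_right_mono) auto
  also have "\<dots> = 4 + ln (1 / e) / ln 2" by (simp add: add_divide_distrib)
  also have "\<dots> \<le> 4 + ln (1 / e) / (2 / 3)"
    using inv_sqrt_ln_bounds[OF e] ln2_ge_two_thirds by (intro add_left_mono divide_left_mono) auto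
  also have "\<dots> \<le> 8 * ln (1 / e)" using inv_sqrt_ln_bounds[OF e] by simp
  finally show "log 2 (card (grid e)) \<le> 8 * ln (1 / e)" .
qed

lemma card_codes_le_powr:
  assumes "2 \<le> card (grid e)"
  shows "real (card (codes e n)) \<le> 2 powr (3 * real (n + 1) * log 2 (card (grid e)))"
proof -
  let ?g = "card (grid e)"
  have "n + 1 \<le> ?g ^ (n + 1)" using less_exp[of "n + 1"] power_mono[OF assms, of "n + 1"] by linarith
  hence "card (codes e n) \<le> ?g ^ (n + 1) * (?g * ?g) ^ (n + 1)"
    unfolding card_codes by (rule mult_right_mono) simp
  also have "\<dots> = (?g * ?g * ?g) ^ (n + 1)" by (simp only: power_mult_distrib)
  also have "\<dots> = ?g ^ (3 * (n + 1))" by (simp only: power_mult power3_eq_cube)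
  finally have "real (card (codes e n)) \<le> real ?g ^ (3 * (n + 1))"
    by (metis of_nat_le_iff of_nat_power)
  also have "\<dots> = real ?g powr real (3 * (n + 1))" using assms by (intro powr_realpow[symmetric]) simp
  also have "\<dots> = 2 powr (3 * real (n + 1) * log 2 ?g)"
    using assms by (simp add: powr_powr[symmetric] mult.commute)
  finally show ?thesis .
qed

lemma card_codes_knot_budget_le:
  assumes \<beta>: "0 \<le> \<beta>" and e: "0 < e" "e < 1/2"
  shows "real (card (codes e (knot_budget \<beta> e)))
    \<le> 2 powr (24 * (128 + 24 * \<beta>) * e powr (-1/2) * (ln (1 / e)) ^ 2)"
proof -
  define X where "X = 1 / sqrt e"
  define L where "L = ln (1 / e)"
  have X: "1 \<le> X" "2/3 \<le> L" "2/3 \<le> X * L" using inv_sqrt_ln_bounds[OF e] unfolding X_def L_def by auto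
  have "0 \<le> (124 + 24 * \<beta>) * X * L" using X \<beta> by simp
  hence "real (knot_budget \<beta> e) = of_int \<lceil>(124 + 24 * \<beta>) * X * L\<rceil>"
    unfolding knot_budget_def X_def[symmetric] L_def[symmetric] by simp
  hence "real (knot_budget \<beta> e) \<le> (124 + 24 * \<beta>) * X * L + 1" by linarith
  hence "3 * real (knot_budget \<beta> e + 1) \<le> 3 * ((127 + 24 * \<beta>) * X * L)"
    using X by (simp add: algebra_simps)
  hence "3 * real (knot_budget \<beta> e + 1) * log 2 (card (grid e)) \<le> 3 * ((127 + 24 * \<beta>) * X * L) * (8 * L)"
    using card_grid_bounds[OF e] unfolding L_def by (intro mult_mono) auto
  also have "\<dots> \<le> 24 * (128 + 24 * \<beta>) * X * L ^ 2"
    using X by (simp add: power2_eq_square algebra_simps)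
  finally have exponent: "3 * real (knot_budget \<beta> e + 1) * log 2 (card (grid e)) \<le> 24 * (128 + 24 * \<beta>) * X * L ^ 2" .
  have "real (card (codes e (knot_budget \<beta> e))) \<le> 2 powr (3 * real (knot_budget \<beta> e + 1) * log 2 (card (grid e)))"
    by (rule card_codes_le_powr[OF card_grid_bounds(1)[OF e]])
  also have "\<dots> \<le> 2 powr (24 * (128 + 24 * \<beta>) * X * L ^ 2)"
    by (rule powr_mono[OF exponent]) simp
  finally have "real (card (codes e (knot_budget \<beta> e))) \<le> 2 powr (24 * (128 + 24 * \<beta>) * X * L ^ 2)" .
  moreover have "e powr (-1/2) = X"
    using powr_minus[of e "1/2"] powr_half_sqrt[of e] e unfolding X_def by (simp add: inverse_eq_divide)
  ultimately show ?thesis unfolding L_def by simp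
qed

lemma (in sampling) pwl_knot_has_code:
  assumes "K \<le> n"
  shows "\<exists>\<kappa>\<in>codes e n. decode \<kappa> = distr uniform01 borel (\<lambda>x. pwl K knot (1 - x))"
proof
  define f where "f m = (if m \<le> n then if m \<le> K then knot m else (0, 0) else undefined)" for m
  have "0 \<in> grid e" unfolding grid_def by force
  thus "(K, f) \<in> codes e n" unfolding codes_def f_def using assms knot_in_grid by auto
  show "decode (K, f) = distr uniform01 borel (\<lambda>x. pwl K knot (1 - x))"
    unfolding decode_def using assms
    by (auto simp: f_def intro!: arg_cong[where f="distr uniform01 borel"] pwl_cong)
qed

lemma irreg_class_has_close_code:
  assumes M: "M \<in> irreg_class \<beta>" and \<beta>: "0 \<le> \<beta>" and e: "0 < e" "e < 1/2"
  shows "\<exists>\<kappa>\<in>codes e (knot_budget \<beta> e). levy_dist (cdf M) (cdf (decode \<kappa>)) \<le> e"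
proof -
  obtain b where b: "b \<le> \<beta> + 1" "irregularity_bounded M b"
    using irreg_class_imp_irregularity_bounded[OF M] by blast
  interpret sampling M b e
    using b(2) e by (simp add: sampling_def sampling_axioms_def)
  have "(100 + 24 * b) * (1 / sqrt e * ln (1 / e)) \<le> (124 + 24 * \<beta>) * (1 / sqrt e * ln (1 / e))"
    using b(1) inv_sqrt_ln_bounds[OF e] by (intro mult_right_mono) auto
  hence "real K \<le> (124 + 24 * \<beta>) * (1 / sqrt e) * ln (1 / e)"
    using K_le by (simp add: mult.assoc)
  hence "K \<le> knot_budget \<beta> e" unfolding knot_budget_def by linarith
  then obtain \<kappa> where "\<kappa> \<in> codes e (knot_budget \<beta> e)" "decode \<kappa> = distr uniform01 borel (\<lambda>x. pwl K knot (1 - x))"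
    using pwl_knot_has_code by blast
  thus ?thesis using levy_dist_pwl_le by (intro bexI[of _ \<kappa>]) simp_all
qed

lemma describable_by_decoding:
  assumes "finite C" "real (card C) \<le> 2 powr b"
    and "\<And>\<kappa>. \<kappa> \<in> C \<Longrightarrow> real_distribution (dec \<kappa>)"
    and "\<And>M. M \<in> \<C> \<Longrightarrow> \<exists>\<kappa>\<in>C. levy_dist (cdf M) (cdf (dec \<kappa>)) \<le> e"
  shows "describable \<C> b e"
  unfolding describable_def
proof (intro exI[of _ "dec ` C"] conjI ballI)
  show "real (card (dec ` C)) \<le> 2 powr b"
    using card_image_le[OF assms(1), of dec] assms(2) by linarith
qed (use assms in auto)

theorem theorem2:
  fixes \<beta> :: real
  assumes "\<beta> \<ge> 0"
  shows "\<exists>C k. C > 0 \<and> (\<forall>\<epsilon>::real. 0 < \<epsilon> \<and> \<epsilon> < 1/2 \<longrightarrow>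
           describable (irreg_class \<beta>) (C * \<epsilon> powr (-1/2) * (ln (1/\<epsilon>)) ^ k) \<epsilon>)"
proof (intro exI[of _ "24 * (128 + 24 * \<beta>)"] exI[of _ 2] conjI allI impI)
  show "0 < 24 * (128 + 24 * \<beta>)" using assms by simp
  fix \<epsilon> :: real assume \<epsilon>: "0 < \<epsilon> \<and> \<epsilon> < 1/2"
  show "describable (irreg_class \<beta>) (24 * (128 + 24 * \<beta>) * \<epsilon> powr (-1/2) * (ln (1/\<epsilon>)) ^ 2) \<epsilon>"
  proof (rule describable_by_decoding[where C="codes \<epsilon> (knot_budget \<beta> \<epsilon>)" and dec=decode])
    show "real (card (codes \<epsilon> (knot_budget \<beta> \<epsilon>))) \<le> 2 powr (24 * (128 + 24 * \<beta>) * \<epsilon> powr (-1/2) * (ln (1/\<epsilon>)) ^ 2)"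
      using card_codes_knot_budget_le[OF assms] \<epsilon> by blast
    show "\<exists>\<kappa>\<in>codes \<epsilon> (knot_budget \<beta> \<epsilon>). levy_dist (cdf M) (cdf (decode \<kappa>)) \<le> \<epsilon>"
      if "M \<in> irreg_class \<beta>" for M
      using irreg_class_has_close_code[OF that assms] \<epsilon> by blast
  qed (rule finite_codes, rule real_distribution_decode)
qed

end
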